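(* Let $\mathbf{A}\in\mathsf{K}$. Then the following hold. (i) The $\{\wedge,\vee,\neg,0,1\}$-reduct of $\mathbf{A}$ is an involutive bisemilattice. (ii) All homomorphisms $p_{ij}$ in the Płonka sum representation of this reduct are surjective. (iii) Suppose the lowest fibre $\mathbf{A}_0$ is a two-element Boolean algebra. Then there is a unique unary operation $J_2$ on the reduct turning it into a member of $\mathsf{K}$, namely: $J_2a=1$ if $a=1_i$ (the top of fibre $\mathbf{A}_i$) for some $i\in I^+$, and $J_2a=0$ otherwise. Here $I^+=\{i\in I:|A_i|>1\}$.
   Context: $\mathsf{K}$ is the variety of type $\langle\wedge,\vee,\neg,J_2,0,1\rangle$ axiomatised by: - $x\vee x\approx x$; - $x\vee y\approx y\vee x$; - $x\vee(y\vee z)\approx(x\vee y)\vee z$; - $\neg\neg x\approx x$; - $x\wedge y\approx\neg(\neg x\vee\neg y)$; - $x\wedge(\neg x\vee y)\approx x\wedge y$; - $0\vee x\approx x$; - $1\approx\neg0$; - $J_2x\vee\neg J_2x\approx1$; - $x\vee J_2y\approx x\vee J_2(x\vee y)$; - $x\wedge J_2x\approx x$; - $J_2(x\wedge\neg x)\approx0$. An involutive bisemilattice is an algebra $\langle A,\wedge,\vee,\neg,0,1\rangle$ satisfying the first eight identities. Equivalently, it is an algebra isomorphic to a Płonka sum of Boolean algebras. Such a sum is built from: - a join-semilattice $\langle I,\vee,0\rangle$ with least element $0$; - pairwise disjoint Boolean algebras $\mathbf{A}_i$ (fibres); - homomorphisms $p_{ij}:\mathbf{A}_i\to\mathbf{A}_j$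 for $i\le j$, with $p_{ii}=\mathrm{id}$ and $p_{jk}p_{ij}=p_{ik}$. Its universe is $\bigsqcup A_i$. Operations are computed by pushing the arguments via the $p$'s to the fibre indexed by the join of their indices; constants come from $\mathbf{A}_0$. This representation is canonical: $a,b$ lie in the same fibre iff $a\wedge(a\vee b)=a$ and $b\wedge(b\vee a)=b$. Also $p_{ij}(a)=a\wedge(a\vee b)$ for any $b\in A_j$. A fibre is trivial if it is a singleton. *)

theory Defs
  imports Main
begin

definition inv_bisemilattice ::
  "'a set \<Rightarrow> ('a \<Rightarrow> 'a \<Rightarrow> 'a) \<Rightarrow> ('a \<Rightarrow> 'a \<Rightarrow> 'a) \<Rightarrow> ('a \<Rightarrow> 'a) \<Rightarrow> 'a \<Rightarrow> 'a \<Rightarrow> bool"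
  where "inv_bisemilattice A meet join neg zero one \<longleftrightarrow>
    zero \<in> A \<and> one \<in> A \<and>
    (\<forall>x\<in>A. \<forall>y\<in>A. meet x y \<in> A \<and> join x y \<in> A) \<and> (\<forall>x\<in>A. neg x \<in> A) \<and>
    (\<forall>x\<in>A. join x x = x) \<and>
    (\<forall>x\<in>A. \<forall>y\<in>A. join x y = join y x) \<and>
    (\<forall>x\<in>A. \<forall>y\<in>A. \<forall>z\<in>A. join x (join y z) = join (join x y) z) \<and>
    (\<forall>x\<in>A. neg (neg x) = x) \<and>
    (\<forall>x\<in>A. \<forall>y\<in>A. meet x y = neg (join (neg x) (neg y))) \<and>
    (\<forall>x\<in>A. \<forall>y\<in>A. meet x (join (neg x) y) = meet x y) \<and>
    (\<forall>x\<in>A. join zero x = x) \<and>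
    one = neg zero"

definition K_alg ::
  "'a set \<Rightarrow> ('a \<Rightarrow> 'a \<Rightarrow> 'a) \<Rightarrow> ('a \<Rightarrow> 'a \<Rightarrow> 'a) \<Rightarrow> ('a \<Rightarrow> 'a) \<Rightarrow> ('a \<Rightarrow> 'a) \<Rightarrow> 'a \<Rightarrow> 'a \<Rightarrow> bool"
  where "K_alg A meet join neg J zero one \<longleftrightarrow>
    zero \<in> A \<and> one \<in> A \<and>
    (\<forall>x\<in>A. \<forall>y\<in>A. meet x y \<in> A \<and> join x y \<in> A) \<and> (\<forall>x\<in>A. neg x \<in> A) \<and>
    (\<forall>x\<in>A. J x \<in> A) \<and>
    (\<forall>x\<in>A. join x x = x) \<and>
    (\<forall>x\<in>A. \<forall>y\<in>A. join x y = join y x) \<and>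
    (\<forall>x\<in>A. \<forall>y\<in>A. \<forall>z\<in>A. join x (join y z) = join (join x y) z) \<and>
    (\<forall>x\<in>A. neg (neg x) = x) \<and>
    (\<forall>x\<in>A. \<forall>y\<in>A. meet x y = neg (join (neg x) (neg y))) \<and>
    (\<forall>x\<in>A. \<forall>y\<in>A. meet x (join (neg x) y) = meet x y) \<and>
    (\<forall>x\<in>A. join zero x = x) \<and>
    one = neg zero \<and>
    (\<forall>x\<in>A. join (J x) (neg (J x)) = one) \<and>
    (\<forall>x\<in>A. \<forall>y\<in>A. join x (J y) = join x (J (join x y))) \<and>
    (\<forall>x\<in>A. meet x (J x) = x) \<and>
    (\<forall>x\<in>A. J (meet x (neg x)) = zero)"

definition same_fibre :: "('a \<Rightarrow> 'a \<Rightarrow> 'a) \<Rightarrow> ('a \<Rightarrow> 'a \<Rightarrow> 'a) \<Rightarrow> 'a \<Rightarrow> 'a \<Rightarrow> bool"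
  where "same_fibre meet join a b \<longleftrightarrow> meet a (join a b) = a \<and> meet b (join b a) = b"

text \<open>The fibre of a lies below the fibre of b in the index semilattice
  (i \<le> j iff i \<or> j = j, and the index of a \<or> b is the join of the indices).\<close>
definition fibre_le :: "('a \<Rightarrow> 'a \<Rightarrow> 'a) \<Rightarrow> ('a \<Rightarrow> 'a \<Rightarrow> 'a) \<Rightarrow> 'a \<Rightarrow> 'a \<Rightarrow> bool"
  where "fibre_le meet join a b \<longleftrightarrow> same_fibre meet join (join a b) b"

definition fibre :: "'a set \<Rightarrow> ('a \<Rightarrow> 'a \<Rightarrow> 'a) \<Rightarrow> ('a \<Rightarrow> 'a \<Rightarrow> 'a) \<Rightarrow> 'a \<Rightarrow> 'a set"
  where "fibre A meet join a = {x\<in>A. same_fibre meet join x a}"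

text \<open>Transition map p_{ij}(a) = a \<and> (a \<or> b), for b in the fibre A_j.\<close>
definition plonka_p :: "('a \<Rightarrow> 'a \<Rightarrow> 'a) \<Rightarrow> ('a \<Rightarrow> 'a \<Rightarrow> 'a) \<Rightarrow> 'a \<Rightarrow> 'a \<Rightarrow> 'a"
  where "plonka_p meet join b a = meet a (join a b)"

definition is_fibre_top :: "'a set \<Rightarrow> ('a \<Rightarrow> 'a \<Rightarrow> 'a) \<Rightarrow> ('a \<Rightarrow> 'a \<Rightarrow> 'a) \<Rightarrow> 'a \<Rightarrow> bool"
  where "is_fibre_top A meet join t \<longleftrightarrow> t \<in> A \<and> (\<forall>x\<in>fibre A meet join t. meet x t = x)"

end

theory Submission
  imports Defs
begin

(* In an involutive bisemilattice the bottom and the top of the fibre of x are x \<sqinter> 0 and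
  x \<squnion> 1, and x, y lie in the same fibre iff x \<sqinter> 0 = y \<sqinter> 0.  The axioms of K put J x into
  the lowest fibre and give x = J x \<squnion> (x \<sqinter> 0).  So every y in a fibre A_j is the image of
  J y \<squnion> 0_i \<in> A_i under p_ij, which is surjectivity.  If A_0 = {0, 1}, then J x \<in> {0, 1};
  by the decomposition, J x = 1 makes x the top of its fibre, which is nontrivial because
  J 0_i = 0, while J x = 0 makes x the bottom of its fibre, which is trivial if x is also
  its top.  So J is determined. *)

locale inv_bisemilattice_on =
  fixes A :: "'a set"
    and meet :: "'a \<Rightarrow> 'a \<Rightarrow> 'a" (infixl "\<sqinter>" 70)
    and join :: "'a \<Rightarrow> 'a \<Rightarrow> 'a" (infixl "\<squnion>" 65)
    and neg :: "'a \<Rightarrow> 'a" ("\<sim>_" [80] 80)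
    and zero one :: 'a
  assumes zero_closed: "zero \<in> A"
    and meet_closed: "x \<in> A \<Longrightarrow> y \<in> A \<Longrightarrow> x \<sqinter> y \<in> A"
    and join_closed: "x \<in> A \<Longrightarrow> y \<in> A \<Longrightarrow> x \<squnion> y \<in> A"
    and neg_closed: "x \<in> A \<Longrightarrow> \<sim>x \<in> A"
    and join_idem: "x \<in> A \<Longrightarrow> x \<squnion> x = x"
    and join_commute: "x \<in> A \<Longrightarrow> y \<in> A \<Longrightarrow> x \<squnion> y = y \<squnion> x"
    and join_assoc: "x \<in> A \<Longrightarrow> y \<in> A \<Longrightarrow> w \<in> A \<Longrightarrow> x \<squnion> y \<squnion> w = x \<squnion> (y \<squnion> w)"
    and neg_neg: "x \<in> A \<Longrightarrow> \<sim>\<sim>x = x"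
    and meet_def: "x \<in> A \<Longrightarrow> y \<in> A \<Longrightarrow> x \<sqinter> y = \<sim>(\<sim>x \<squnion> \<sim>y)"
    and meet_neg_join: "x \<in> A \<Longrightarrow> y \<in> A \<Longrightarrow> x \<sqinter> (\<sim>x \<squnion> y) = x \<sqinter> y"
    and zero_join: "x \<in> A \<Longrightarrow> zero \<squnion> x = x"
    and one_def: "one = \<sim>zero"
begin

lemma one_closed: "one \<in> A"
  by (simp add: one_def neg_closed zero_closed)

lemmas closed = zero_closed one_closed meet_closed join_closed neg_closed

lemma neg_join: "x \<in> A \<Longrightarrow> y \<in> A \<Longrightarrow> \<sim>(x \<squnion> y) = \<sim>x \<sqinter> \<sim>y"
  by (simp add: meet_def neg_neg neg_closed)

lemma neg_meet: "x \<in> A \<Longrightarrow> y \<in> A \<Longrightarrow> \<sim>(x \<sqinter> y) = \<sim>x \<squnion> \<sim>y"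
  by (simp add: meet_def neg_neg neg_closed join_closed)

lemma meet_idem: "x \<in> A \<Longrightarrow> x \<sqinter> x = x"
  by (simp add: meet_def join_idem neg_neg neg_closed)

lemma meet_commute: "x \<in> A \<Longrightarrow> y \<in> A \<Longrightarrow> x \<sqinter> y = y \<sqinter> x"
  by (simp add: meet_def join_commute neg_closed)

lemma meet_assoc: "x \<in> A \<Longrightarrow> y \<in> A \<Longrightarrow> w \<in> A \<Longrightarrow> x \<sqinter> y \<sqinter> w = x \<sqinter> (y \<sqinter> w)"
  by (simp add: meet_def neg_neg join_assoc neg_closed join_closed)

lemma one_meet: "x \<in> A \<Longrightarrow> one \<sqinter> x = x"
  by (simp add: meet_def one_def neg_neg zero_join neg_closed zero_closed)

lemma neg_inject: "x \<in> A \<Longrightarrow> y \<in> A \<Longrightarrow> \<sim>x = \<sim>y \<longleftrightarrow> x = y"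
  by (metis neg_neg)

lemma join_neg_meet: "x \<in> A \<Longrightarrow> y \<in> A \<Longrightarrow> x \<squnion> (\<sim>x \<sqinter> y) = x \<squnion> y"
  using meet_neg_join [of "\<sim>x" "\<sim>y"]
  by (subst neg_inject [symmetric]) (simp_all add: neg_join neg_meet neg_neg closed)

lemma join_left_commute: "x \<in> A \<Longrightarrow> y \<in> A \<Longrightarrow> w \<in> A \<Longrightarrow> x \<squnion> (y \<squnion> w) = y \<squnion> (x \<squnion> w)"
  by (metis join_assoc join_commute)

lemma meet_zero_eq_meet_neg: "x \<in> A \<Longrightarrow> x \<sqinter> zero = x \<sqinter> \<sim>x"
  using meet_neg_join [of x zero] by (simp add: join_commute zero_join closed)

lemma join_one_eq_join_neg: "x \<in> A \<Longrightarrow> x \<squnion> one = x \<squnion> \<sim>x"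
  using join_neg_meet [of x one] by (simp add: meet_commute one_meet closed)

lemma neg_one: "\<sim>one = zero"
  by (simp add: one_def neg_neg zero_closed)

lemma neg_meet_zero: "x \<in> A \<Longrightarrow> \<sim>(x \<sqinter> zero) = x \<squnion> one"
  by (simp add: neg_meet meet_zero_eq_meet_neg join_one_eq_join_neg neg_neg closed join_commute [of x "\<sim>x"])

lemma meet_zero_neg: "x \<in> A \<Longrightarrow> \<sim>x \<sqinter> zero = x \<sqinter> zero"
  by (simp add: meet_zero_eq_meet_neg neg_neg closed meet_commute [of "\<sim>x" x])

lemma join_meet_zero_self: "x \<in> A \<Longrightarrow> x \<squnion> (x \<sqinter> zero) = x"
  by (simp add: meet_zero_eq_meet_neg meet_commute [of x "\<sim>x"] join_neg_meet join_idem closed)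

lemma meet_join_one_self: "x \<in> A \<Longrightarrow> x \<sqinter> (x \<squnion> one) = x"
  by (simp add: join_one_eq_join_neg join_commute [of x "\<sim>x"] meet_neg_join meet_idem closed)

lemma neg_join_one: "x \<in> A \<Longrightarrow> \<sim>x \<squnion> one = x \<squnion> one"
  by (simp add: join_one_eq_join_neg neg_neg closed join_commute [of x "\<sim>x"])

lemma join_join_self: "x \<in> A \<Longrightarrow> y \<in> A \<Longrightarrow> x \<squnion> (x \<squnion> y) = x \<squnion> y"
  by (simp add: join_assoc [symmetric] join_idem)

lemma meet_zero_join_one: "x \<in> A \<Longrightarrow> x \<sqinter> zero \<squnion> one = x \<squnion> one"
proof -
  assume x: "x \<in> A"
  have "x \<sqinter> zero \<squnion> one = x \<sqinter> zero \<squnion> (x \<squnion> one)"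
    by (simp add: join_one_eq_join_neg [of "x \<sqinter> zero"] neg_meet_zero closed x)
  also have "\<dots> = x \<squnion> x \<sqinter> zero \<squnion> one"
    by (simp add: join_left_commute [of "x \<sqinter> zero" x] join_assoc closed x)
  finally show ?thesis
    by (simp add: join_meet_zero_self x)
qed

(* Both sides are the image of x in the fibre of x \<squnion> y. *)
lemma join_meet_zero_eq_meet_join_one:
  assumes x: "x \<in> A" and y: "y \<in> A"
  shows "x \<squnion> y \<sqinter> zero = x \<sqinter> (y \<squnion> one)"
proof -
  define g where "g = x \<squnion> y \<sqinter> zero"
  have g: "g \<in> A"
    unfolding g_def by (intro closed x y)
  have g_join_one: "g \<squnion> one = x \<squnion> (y \<squnion> one)"
    by (simp add: g_def join_assoc meet_zero_join_one closed x y)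
  have "\<sim>g \<squnion> (y \<squnion> one) = y \<squnion> (g \<squnion> one)"
    by (simp add: join_left_commute [of "\<sim>g"] neg_join_one closed g y)
  also have "\<dots> = g \<squnion> one"
    by (simp add: g_join_one join_left_commute [of y x] join_join_self closed x y)
  finally have neg_g_join: "\<sim>g \<squnion> (y \<squnion> one) = g \<squnion> one" .
  have "x \<sqinter> (y \<squnion> one) = (y \<squnion> one) \<sqinter> (\<sim>(y \<squnion> one) \<squnion> x)"
    by (simp add: meet_neg_join meet_commute [of x] closed x y)
  also have "\<dots> = g \<sqinter> (y \<squnion> one)"
    by (simp add: g_def neg_meet_zero [OF y, symmetric] neg_neg closed x y
        join_commute [of "y \<sqinter> zero" x] meet_commute [of "\<sim>(y \<sqinter> zero)"])
  also have "\<dots> = g \<sqinter> (\<sim>g \<squnion> (y \<squnion> one))"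
    by (simp add: meet_neg_join closed g y)
  also have "\<dots> = g"
    by (simp add: neg_g_join meet_join_one_self g)
  finally show ?thesis
    by (simp add: g_def)
qed

lemma join_meet_zero: "x \<in> A \<Longrightarrow> y \<in> A \<Longrightarrow> (x \<squnion> y) \<sqinter> zero = x \<sqinter> y \<sqinter> zero"
proof -
  assume x: "x \<in> A" and y: "y \<in> A"
  have "(x \<squnion> y) \<sqinter> \<sim>x = \<sim>x \<sqinter> y"
    using meet_neg_join [of "\<sim>x" y] by (simp add: neg_neg meet_commute [of "x \<squnion> y"] closed x y)
  then have "(x \<squnion> y) \<sqinter> zero = \<sim>x \<sqinter> (y \<sqinter> zero)"
    by (simp add: meet_zero_eq_meet_neg [of "x \<squnion> y"] meet_zero_eq_meet_neg [of y] neg_join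
        meet_assoc [symmetric] closed x y)
  also have "\<dots> = x \<sqinter> zero \<sqinter> y"
    by (simp add: meet_zero_neg [OF x, symmetric] meet_assoc meet_commute [of zero y] closed x y)
  finally show ?thesis
    by (simp add: meet_assoc meet_commute [of zero y] closed x y)
qed

lemma join_meet_zero_distrib:
  "x \<in> A \<Longrightarrow> y \<in> A \<Longrightarrow> (x \<squnion> y) \<sqinter> zero = x \<sqinter> zero \<squnion> y \<sqinter> zero"
  by (simp add: join_meet_zero join_meet_zero_eq_meet_join_one [of "x \<sqinter> zero"]
      join_meet_zero_eq_meet_join_one [of zero, symmetric] zero_join meet_assoc closed)

lemma meet_join_absorb: "x \<in> A \<Longrightarrow> y \<in> A \<Longrightarrow> x \<sqinter> (x \<squnion> y) = x \<squnion> y \<sqinter> zero"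
proof -
  assume x: "x \<in> A" and y: "y \<in> A"
  have "\<sim>x \<squnion> x = x \<squnion> one"
    by (simp add: join_one_eq_join_neg join_commute [of "\<sim>x" x] closed x)
  then have "\<sim>x \<squnion> (x \<squnion> y) = x \<squnion> (one \<squnion> y)"
    by (simp add: join_assoc [symmetric] closed x y)
  also have "\<dots> = x \<squnion> y \<squnion> one"
    by (simp add: join_commute [of one y] join_assoc closed x y)
  finally have neg_x_join: "\<sim>x \<squnion> (x \<squnion> y) = x \<squnion> y \<squnion> one" .
  have "x \<sqinter> (x \<squnion> y) = x \<squnion> (x \<squnion> y) \<sqinter> zero"
    using meet_neg_join [of x "x \<squnion> y"] neg_x_join
    by (simp add: join_meet_zero_eq_meet_join_one closed x y)
  also have "\<dots> = x \<squnion> y \<sqinter> zero"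
    by (simp add: join_meet_zero_distrib join_assoc [symmetric] join_meet_zero_self closed x y)
  finally show ?thesis .
qed

lemma meet_zero_meet_zero: "x \<in> A \<Longrightarrow> x \<sqinter> zero \<sqinter> zero = x \<sqinter> zero"
  by (simp add: meet_assoc meet_idem closed)

lemma join_one_meet_zero: "x \<in> A \<Longrightarrow> (x \<squnion> one) \<sqinter> zero = x \<sqinter> zero"
  by (simp add: join_meet_zero meet_commute [of x one] one_meet closed)

lemma same_fibre_iff:
  assumes x: "x \<in> A" and y: "y \<in> A"
  shows "same_fibre meet join x y \<longleftrightarrow> x \<sqinter> zero = y \<sqinter> zero"
proof
  have below: "u \<sqinter> zero = u \<sqinter> zero \<squnion> v \<sqinter> zero"
    if "u \<sqinter> (u \<squnion> v) = u" "u \<in> A" "v \<in> A" for u v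
  proof -
    have "u \<sqinter> zero = (u \<squnion> v \<sqinter> zero) \<sqinter> zero"
      using that by (simp add: meet_join_absorb)
    then show ?thesis
      using that by (simp add: join_meet_zero_distrib meet_zero_meet_zero closed)
  qed
  assume "same_fibre meet join x y"
  then show "x \<sqinter> zero = y \<sqinter> zero"
    using below [of x y] below [of y x] x y
    by (simp add: same_fibre_def join_commute [of "y \<sqinter> zero"] closed)
next
  assume "x \<sqinter> zero = y \<sqinter> zero"
  then show "same_fibre meet join x y"
    using x y join_meet_zero_self [of x] join_meet_zero_self [of y]
    by (simp add: same_fibre_def meet_join_absorb)
qed

lemma mem_fibre_iff: "a \<in> A \<Longrightarrow> x \<in> fibre A meet join a \<longleftrightarrow> x \<in> A \<and> x \<sqinter> zero = a \<sqinter> zero"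
  by (auto simp: fibre_def same_fibre_iff)

lemma fibre_le_iff:
  "a \<in> A \<Longrightarrow> b \<in> A \<Longrightarrow> fibre_le meet join a b \<longleftrightarrow> a \<sqinter> zero \<squnion> b \<sqinter> zero = b \<sqinter> zero"
  by (simp add: fibre_le_def same_fibre_iff join_meet_zero_distrib closed)

lemma plonka_p_eq: "x \<in> A \<Longrightarrow> b \<in> A \<Longrightarrow> plonka_p meet join b x = x \<squnion> b \<sqinter> zero"
  by (simp add: plonka_p_def meet_join_absorb)

lemma is_fibre_top_iff: "a \<in> A \<Longrightarrow> is_fibre_top A meet join a \<longleftrightarrow> a \<squnion> one = a"
proof
  assume a: "a \<in> A" and "is_fibre_top A meet join a"
  moreover have "a \<squnion> one \<in> fibre A meet join a"
    using a by (simp add: mem_fibre_iff join_one_meet_zero closed)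
  ultimately have "(a \<squnion> one) \<sqinter> a = a \<squnion> one"
    by (simp add: is_fibre_top_def)
  then show "a \<squnion> one = a"
    using a by (simp add: meet_commute [of "a \<squnion> one"] meet_join_one_self closed)
next
  assume a: "a \<in> A" and top: "a \<squnion> one = a"
  have "x \<sqinter> a = x" if "x \<in> fibre A meet join a" for x
  proof -
    have x: "x \<in> A" and "x \<sqinter> zero = a \<sqinter> zero"
      using that a by (simp_all add: mem_fibre_iff)
    then have "x \<sqinter> (a \<squnion> one) = x \<squnion> x \<sqinter> zero"
      using a by (simp add: join_meet_zero_eq_meet_join_one)
    then show ?thesis
      using x top by (simp add: join_meet_zero_self)
  qed
  then show "is_fibre_top A meet join a"
    using a by (simp add: is_fibre_top_def)
qed

lemma card_fibre_eq_1_iff: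
  assumes a: "a \<in> A"
  shows "card (fibre A meet join a) = 1 \<longleftrightarrow> a \<squnion> one = a \<sqinter> zero"
proof
  assume "card (fibre A meet join a) = 1"
  then obtain c where "fibre A meet join a = {c}"
    by (auto simp: card_1_singleton_iff)
  moreover have "a \<squnion> one \<in> fibre A meet join a" and "a \<sqinter> zero \<in> fibre A meet join a"
    using a by (simp_all add: mem_fibre_iff join_one_meet_zero meet_zero_meet_zero closed)
  ultimately show "a \<squnion> one = a \<sqinter> zero"
    by simp
next
  assume trivial: "a \<squnion> one = a \<sqinter> zero"
  have collapse: "x = a \<sqinter> zero" if "x \<in> A" "x \<sqinter> zero = a \<sqinter> zero" for x
  proof -
    have "x = x \<sqinter> (x \<squnion> one)"
      using that by (simp add: meet_join_one_self)
    also have "x \<squnion> one = x \<sqinter> zero"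
      using that a trivial by (metis neg_meet_zero)
    also have "x \<sqinter> (x \<sqinter> zero) = x \<sqinter> zero"
      using that(1) by (simp add: meet_assoc [symmetric] meet_idem closed)
    finally show ?thesis
      using that by simp
  qed
  then have "fibre A meet join a = {a}"
    using a collapse [OF a refl, symmetric] by (auto simp: mem_fibre_iff)
  then show "card (fibre A meet join a) = 1"
    by simp
qed

lemma
  assumes "card (fibre A meet join zero) = 2"
  shows card_fibre_zero_2_imp_zero_neq_one: "zero \<noteq> one"
    and card_fibre_zero_2_imp_fibre_zero_eq: "fibre A meet join zero = {zero, one}"
proof -
  show zero_neq_one: "zero \<noteq> one"
    using assms card_fibre_eq_1_iff [OF zero_closed] by (auto simp: zero_join meet_idem closed)
  have "{zero, one} \<subseteq> fibre A meet join zero"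
    by (simp add: mem_fibre_iff one_meet meet_idem closed)
  moreover have "finite (fibre A meet join zero)"
    using assms card.infinite by fastforce
  ultimately show "fibre A meet join zero = {zero, one}"
    using card_subset_eq [of "fibre A meet join zero" "{zero, one}"] assms zero_neq_one by auto
qed

end

locale K_algebra = inv_bisemilattice_on +
  fixes J :: "'a \<Rightarrow> 'a"
  assumes J_closed: "x \<in> A \<Longrightarrow> J x \<in> A"
    and J_join_neg: "x \<in> A \<Longrightarrow> J x \<squnion> \<sim>J x = one"
    and join_J: "x \<in> A \<Longrightarrow> y \<in> A \<Longrightarrow> x \<squnion> J y = x \<squnion> J (x \<squnion> y)"
    and meet_J: "x \<in> A \<Longrightarrow> x \<sqinter> J x = x"
    and J_meet_neg: "x \<in> A \<Longrightarrow> J (x \<sqinter> \<sim>x) = zero"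

lemma K_alg_imp_inv_bisemilattice:
  "K_alg A meet join neg J zero one \<Longrightarrow> inv_bisemilattice A meet join neg zero one"
  unfolding K_alg_def inv_bisemilattice_def by (elim conjE) (intro conjI; assumption)

lemma inv_bisemilattice_imp_inv_bisemilattice_on:
  assumes "inv_bisemilattice A meet join neg zero one"
  shows "inv_bisemilattice_on A meet join neg zero one"
  using assms unfolding inv_bisemilattice_def inv_bisemilattice_on_def
  by (elim conjE) (intro conjI allI impI; metis)

lemma K_alg_imp_K_algebra:
  assumes "K_alg A meet join neg J zero one"
  shows "K_algebra A meet join neg zero one J"
proof (rule K_algebra.intro)
  show "inv_bisemilattice_on A meet join neg zero one"
    using assms by (intro inv_bisemilattice_imp_inv_bisemilattice_on K_alg_imp_inv_bisemilattice)
  show "K_algebra_axioms A meet join neg zero one J"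
    using assms unfolding K_alg_def K_algebra_axioms_def
    by (elim conjE) (intro conjI allI impI; metis)
qed

lemma K_alg_cong:
  assumes "K_alg A meet join neg J zero one" and "\<And>x. x \<in> A \<Longrightarrow> J' x = J x"
  shows "K_alg A meet join neg J' zero one"
  using assms unfolding K_alg_def
  by (elim conjE) (intro conjI; (assumption | metis))

context K_algebra
begin

lemma J_meet_zero: "x \<in> A \<Longrightarrow> J x \<sqinter> zero = zero"
proof -
  assume x: "x \<in> A"
  have "J x \<sqinter> zero = \<sim>(\<sim>J x \<squnion> J x)"
    using x by (subst meet_zero_eq_meet_neg) (simp_all add: meet_def neg_neg J_closed closed)
  also have "\<dots> = zero"
    using x by (simp add: join_commute [of "\<sim>J x"] J_join_neg neg_one J_closed closed)
  finally show ?thesis .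
qed

lemma J_join_meet_zero: "x \<in> A \<Longrightarrow> J x \<squnion> x \<sqinter> zero = x"
proof -
  assume x: "x \<in> A"
  have "x \<squnion> J x = x \<squnion> J (x \<sqinter> zero)"
    using join_J [of x "x \<sqinter> zero"] x by (simp add: join_meet_zero_self closed)
  then have "x \<squnion> J x = x"
    using x by (simp add: meet_zero_eq_meet_neg J_meet_neg join_commute [of x zero] zero_join closed)
  then have "J x \<sqinter> (J x \<squnion> x) = x"
    using x by (simp add: join_commute [of "J x"] meet_commute [of "J x"] meet_J J_closed)
  then show ?thesis
    using x by (simp add: meet_join_absorb J_closed)
qed

lemma plonka_p_image_fibre:
  assumes a: "a \<in> A" and b: "b \<in> A" and le: "fibre_le meet join a b"
  shows "plonka_p meet join b ` fibre A meet join a = fibre A meet join b"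
proof
  have le': "a \<sqinter> zero \<squnion> b \<sqinter> zero = b \<sqinter> zero"
    using le a b by (simp add: fibre_le_iff)
  show "plonka_p meet join b ` fibre A meet join a \<subseteq> fibre A meet join b"
  proof
    fix y assume "y \<in> plonka_p meet join b ` fibre A meet join a"
    then obtain x where x: "x \<in> A" "x \<sqinter> zero = a \<sqinter> zero" and y: "y = x \<squnion> b \<sqinter> zero"
      using a b by (auto simp: mem_fibre_iff plonka_p_eq)
    then show "y \<in> fibre A meet join b"
      using b le' by (simp add: mem_fibre_iff join_meet_zero_distrib meet_zero_meet_zero closed)
  qed
  show "fibre A meet join b \<subseteq> plonka_p meet join b ` fibre A meet join a"
  proof
    fix y assume "y \<in> fibre A meet join b"
    then have y: "y \<in> A" "y \<sqinter> zero = b \<sqinter> zero"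
      using b by (simp_all add: mem_fibre_iff)
    define x where "x = J y \<squnion> a \<sqinter> zero"
    have "x \<in> fibre A meet join a"
      using a y by (simp add: x_def mem_fibre_iff join_meet_zero_distrib J_meet_zero
          meet_zero_meet_zero zero_join J_closed closed)
    moreover have "plonka_p meet join b x = y"
      using a b y le' J_join_meet_zero [of y]
      by (simp add: x_def plonka_p_eq join_assoc J_closed closed)
    ultimately show "y \<in> plonka_p meet join b ` fibre A meet join a"
      by blast
  qed
qed

lemma J_eq_fibre_top_indicator:
  assumes card2: "card (fibre A meet join zero) = 2" and a: "a \<in> A"
  shows "J a = (if is_fibre_top A meet join a \<and> card (fibre A meet join a) \<noteq> 1 then one else zero)"
proof -
  have "J a \<in> fibre A meet join zero"
    using a by (simp add: mem_fibre_iff J_meet_zero meet_idem J_closed closed)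
  then have "J a = zero \<or> J a = one"
    using card_fibre_zero_2_imp_fibre_zero_eq [OF card2] by auto
  then consider "J a = one" "a \<squnion> one = a" | "J a = zero" "a \<sqinter> zero = a"
    using J_join_meet_zero [OF a] a
    by (metis join_meet_zero_eq_meet_join_one one_meet zero_join closed)
  then show ?thesis
  proof cases
    case 1
    have "card (fibre A meet join a) \<noteq> 1"
    proof
      assume "card (fibre A meet join a) = 1"
      then have "a \<sqinter> zero = a"
        using 1 card_fibre_eq_1_iff [OF a] by simp
      then have "J a = zero"
        using a J_meet_neg [OF a] by (simp add: meet_zero_eq_meet_neg)
      then show False
        using 1 card_fibre_zero_2_imp_zero_neq_one [OF card2] by simp
    qed
    then show ?thesis
      using 1 a by (simp add: is_fibre_top_iff)
  next
    case 2
    have "card (fibre A meet join a) = 1" if "is_fibre_top A meet join a"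
      using that 2 is_fibre_top_iff [OF a] card_fibre_eq_1_iff [OF a] by simp
    then show ?thesis
      using 2 by auto
  qed
qed

end

theorem lemma4p3:
  fixes A :: "'a set" and meet join :: "'a \<Rightarrow> 'a \<Rightarrow> 'a" and neg J :: "'a \<Rightarrow> 'a"
    and zero one :: 'a
  assumes K: "K_alg A meet join neg J zero one"
  shows "inv_bisemilattice A meet join neg zero one \<and>
    (\<forall>a\<in>A. \<forall>b\<in>A. fibre_le meet join a b \<longrightarrow>
           plonka_p meet join b ` fibre A meet join a = fibre A meet join b) \<and>
    (card (fibre A meet join zero) = 2 \<longrightarrow>
           K_alg A meet join neg
             (\<lambda>a. if is_fibre_top A meet join a \<and> card (fibre A meet join a) \<noteq> 1
                  then one else zero) zero one \<and>
           (\<forall>J'. K_alg A meet join neg J' zero one \<longrightarrow>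
              (\<forall>a\<in>A. J' a = (if is_fibre_top A meet join a \<and> card (fibre A meet join a) \<noteq> 1
                                then one else zero))))"
proof (intro conjI impI allI ballI)
  interpret K_algebra A meet join neg zero one J
    using K by (rule K_alg_imp_K_algebra)
  show "inv_bisemilattice A meet join neg zero one"
    using K by (rule K_alg_imp_inv_bisemilattice)
  show "plonka_p meet join b ` fibre A meet join a = fibre A meet join b"
    if "a \<in> A" "b \<in> A" "fibre_le meet join a b" for a b
    using that by (rule plonka_p_image_fibre)
  assume card2: "card (fibre A meet join zero) = 2"
  show "K_alg A meet join neg
      (\<lambda>a. if is_fibre_top A meet join a \<and> card (fibre A meet join a) \<noteq> 1 then one else zero)
      zero one"
    using K by (rule K_alg_cong) (simp add: J_eq_fibre_top_indicator [OF card2])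
  show "J' a = (if is_fibre_top A meet join a \<and> card (fibre A meet join a) \<noteq> 1 then one else zero)"
    if "K_alg A meet join neg J' zero one" and "a \<in> A" for J' a
    using K_algebra.J_eq_fibre_top_indicator [OF K_alg_imp_K_algebra [OF that(1)] card2 that(2)] .
qed

end
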